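(* Suppose $b$ satisfies (H0). For $p\ge3$ define $$\varepsilon_p:=\frac{2}{A_2}|\mathbb S^{N-2}|\int_0^\pi\Big\{\int_0^1t\Big(1-\frac{\sin^2\theta}{2}t\Big)^{p-2}dt\Big\}b(\cos\theta)\sin^N\theta\,d\theta\quad(\le1).$$ Then $\varepsilon_p\to0$ as $p\to\infty$. Furthermore, if either $0<\gamma\le1$ or (H2) holds, then $p^{2-2/\gamma}\varepsilon_p\to0$ as $p\to\infty$.
   Context: $N\ge2$, $b\ge0$ Borel on $[-1,1]$, $0<\gamma\le2$. $|\mathbb S^{N-2}|$ is the surface measure of the unit sphere of $\mathbb R^{N-1}$ ($=2$ if $N=2$). (H0): $A_2:=|\mathbb S^{N-2}|\int_0^\pi b(\cos\theta)\sin^N\theta\,d\theta<\infty$ (and assume $A_2>0$). (H2): $1<\gamma<2$ and $\int_0^\pi b(\cos\theta)\sin^{N-2\nu}\theta\,d\theta<\infty$ with $\nu=2-2/\gamma$. *)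

theory Defs
  imports "HOL-Analysis.Analysis"
begin

text \<open>Surface measure of the unit sphere of R^(N-1), i.e. of S^(N-2):
  2 pi^((N-1)/2) / Gamma((N-1)/2). For N = 2 this equals 2.\<close>
definition sphere_meas :: "nat \<Rightarrow> real" where
  "sphere_meas N = 2 * pi powr ((real N - 1) / 2) / Gamma ((real N - 1) / 2)"

definition A2 :: "nat \<Rightarrow> (real \<Rightarrow> real) \<Rightarrow> real" where
  "A2 N b = sphere_meas N * (LINT \<theta>:{0..pi}|lborel. b (cos \<theta>) * sin \<theta> ^ N)"

definition eps :: "nat \<Rightarrow> (real \<Rightarrow> real) \<Rightarrow> real \<Rightarrow> real" where
  "eps N b p = 2 / A2 N b * sphere_meas N *
     (LINT \<theta>:{0..pi}|lborel.
        (LINT t:{0..1}|lborel. t * (1 - (sin \<theta>)\<^sup>2 / 2 * t) powr (p - 2))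
        * b (cos \<theta>) * sin \<theta> ^ N)"

end

theory Submission imports Defs "HOL-Real_Asymp.Real_Asymp" begin

(*
  Write I(p,\<theta>) = \<integral>\<^sub>0\<^sup>1 t (1 - t sin\<^sup>2\<theta>/2)^(p-2) dt for the inner integral,
  so that eps_p is a constant multiple of \<integral>\<^sub>0\<^sup>\<pi> I(p,\<theta>) b(cos \<theta>) sin\<^sup>N \<theta> d\<theta>.

  The single analytic input is the pointwise estimate, valid for every \<mu> \<in> [0,1],
      t (1 - c t)^q \<le> t e^(-qct) \<le> t / (1 + qct) \<le> (qc)^(-\<mu>),
  which gives I(p,\<theta>) \<le> ((p-2) sin\<^sup>2\<theta>/2)^(-\<mu>).  Taking \<mu> = 1 shows that
  p^\<nu> I(p,\<theta>) \<rightarrow> 0 for every \<nu> < 1 and every \<theta> with sin \<theta> \<noteq> 0; taking \<mu> = \<nu> shows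
  that p^\<nu> I(p,\<theta>) sin\<^sup>N\<theta> \<le> 6 sin^(N-2\<nu>)\<theta> for p \<ge> 3.  Dominated convergence then
  yields p^\<nu> eps_p \<rightarrow> 0 whenever 0 \<le> \<nu> < 1 and b(cos \<theta>) sin^(N-2\<nu>)\<theta> is integrable.
  The theorem follows with \<nu> = 0 (this is (H0)), with \<nu> = 2 - 2/\<gamma> \<in> (0,1) under
  (H2), and, for 0 < \<gamma> \<le> 1, from the first part since then p^(2-2/\<gamma>) \<le> 1.
*)

lemma powr_le_one_plus:
  assumes "0 \<le> (x::real)" "0 \<le> \<mu>" "\<mu> \<le> 1"
  shows "x powr \<mu> \<le> 1 + x"
proof (cases "x \<le> 1")
  case True
  thus ?thesis using assms powr_le1[of \<mu> x] by simp
next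
  case False
  have "x powr \<mu> \<le> x powr 1" using False assms by (intro powr_mono) auto
  thus ?thesis using False by simp
qed

lemma profile_bound:
  fixes q c t \<mu> :: real
  assumes q: "q > 0" and c: "c > 0" and t: "0 < t" "t \<le> 1" and ct: "c * t < 1"
    and mu: "0 \<le> \<mu>" "\<mu> \<le> 1"
  shows "t * (1 - c * t) powr q \<le> (q * c) powr (-\<mu>)"
proof -
  define x where "x = q * c * t"
  have x_pos: "x > 0" using q c t by (simp add: x_def)
  have "(1 - c * t) powr q = exp (q * ln (1 - c * t))" using ct by (simp add: powr_def)
  also have "\<dots> \<le> exp (- x)"
  proof -
    have "ln (1 - c * t) \<le> - (c * t)" using ln_le_minus_one[of "1 - c * t"] ct by simp
    hence "q * ln (1 - c * t) \<le> q * (- (c * t))" using q by (intro mult_left_mono) auto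
    thus ?thesis by (simp add: x_def mult.assoc)
  qed
  also have "\<dots> \<le> 1 / (1 + x)"
    using exp_ge_add_one_self[of x] x_pos by (simp add: exp_minus field_simps)
  also have "\<dots> \<le> x powr (-\<mu>)"
    using powr_le_one_plus[of x \<mu>] x_pos mu by (simp add: powr_minus field_simps)
  finally have "t * (1 - c * t) powr q \<le> t * x powr (-\<mu>)" using t by (intro mult_left_mono) auto
  also have "t * x powr (-\<mu>) = (q * c) powr (-\<mu>) * t powr (1 - \<mu>)"
    unfolding x_def using q c t by (simp add: powr_mult powr_diff powr_minus field_simps)
  also have "\<dots> \<le> (q * c) powr (-\<mu>)"
    using t mu mult_left_mono[OF powr_le1[of "1 - \<mu>" t], of "(q * c) powr (-\<mu>)"] by simp
  finally show ?thesis .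
qed

definition inner_eps :: "real \<Rightarrow> real \<Rightarrow> real" where
  "inner_eps p \<theta> = (LINT t:{0..1}|lborel. t * (1 - (sin \<theta>)\<^sup>2 / 2 * t) powr (p - 2))"

lemma inner_eps_measurable: "(\<lambda>\<theta>. inner_eps p \<theta>) \<in> borel_measurable lborel"
  unfolding inner_eps_def set_lebesgue_integral_def
  by (rule lborel.borel_measurable_lebesgue_integral) measurable

lemma inner_eps_nonneg: "0 \<le> inner_eps p \<theta>"
  unfolding inner_eps_def set_lebesgue_integral_def
  by (rule Bochner_Integration.integral_nonneg) (auto simp: indicator_def)

lemma inner_base_bounds:
  assumes "(t::real) \<in> {0..1}"
  shows "1/2 \<le> 1 - (sin \<theta>)\<^sup>2 / 2 * t" "1 - (sin \<theta>)\<^sup>2 / 2 * t \<le> 1"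
proof -
  have "(sin \<theta>)\<^sup>2 * t \<le> 1"
    using assms abs_square_le_1[of "sin \<theta>"] by (intro mult_le_one) auto
  thus "1/2 \<le> 1 - (sin \<theta>)\<^sup>2 / 2 * t" "1 - (sin \<theta>)\<^sup>2 / 2 * t \<le> 1" using assms by auto
qed

lemma inner_eps_integrable:
  "set_integrable lborel {0..1} (\<lambda>t::real. t * (1 - (sin \<theta>)\<^sup>2 / 2 * t) powr (p - 2))"
proof (rule borel_integrable_atLeastAtMost')
  show "continuous_on {0..1} (\<lambda>t. t * (1 - (sin \<theta>)\<^sup>2 / 2 * t) powr (p - 2))"
    using inner_base_bounds(1)[of _ \<theta>] by (intro continuous_intros ballI) force
qed

lemma inner_eps_bound:
  assumes p: "p > 2" and s: "sin \<theta> \<noteq> 0" and mu: "0 \<le> \<mu>" "\<mu> \<le> 1"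
  shows "inner_eps p \<theta> \<le> ((p - 2) * ((sin \<theta>)\<^sup>2 / 2)) powr (-\<mu>)"
proof -
  have "inner_eps p \<theta> \<le> (LINT t::real:{0..1}|lborel. ((p - 2) * ((sin \<theta>)\<^sup>2 / 2)) powr (-\<mu>))"
    unfolding inner_eps_def
  proof (rule set_integral_mono[OF inner_eps_integrable])
    show "set_integrable lborel {0..1} (\<lambda>t::real. ((p - 2) * ((sin \<theta>)\<^sup>2 / 2)) powr (-\<mu>))"
      by (rule borel_integrable_atLeastAtMost') (rule continuous_on_const)
    fix t :: real assume t: "t \<in> {0..1}"
    show "t * (1 - (sin \<theta>)\<^sup>2 / 2 * t) powr (p - 2) \<le> ((p - 2) * ((sin \<theta>)\<^sup>2 / 2)) powr (-\<mu>)"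
    proof (cases "t = 0")
      case False
      thus ?thesis using inner_base_bounds(1)[OF t, of \<theta>] t p s mu
        by (intro profile_bound) auto
    qed simp
  qed
  thus ?thesis by (simp add: set_integral_const)
qed

lemma powr_over_linear_tendsto_zero:
  fixes \<nu> k :: real
  assumes "\<nu> < 1" "k > 0"
  shows "((\<lambda>p. p powr \<nu> * ((p - 2) * k) powr (-1)) \<longlongrightarrow> 0) at_top"
proof -
  have "((\<lambda>p::real. p powr (\<nu> - 1) * (p / (p - 2) / k)) \<longlongrightarrow> 0 * (1 / k)) at_top"
  proof (intro tendsto_mult tendsto_divide tendsto_const)
    show "((\<lambda>p::real. p powr (\<nu> - 1)) \<longlongrightarrow> 0) at_top"
      using assms by (intro tendsto_neg_powr filterlim_ident) auto
    show "((\<lambda>p::real. p / (p - 2)) \<longlongrightarrow> 1) at_top" by real_asymp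
  qed (use assms in auto)
  moreover have "\<forall>\<^sub>F p in at_top. p powr (\<nu> - 1) * (p / (p - 2) / k) = p powr \<nu> * ((p - 2) * k) powr (-1)"
    using eventually_gt_at_top[of 2]
    by eventually_elim (use assms in \<open>simp add: powr_diff powr_minus field_simps\<close>)
  ultimately show ?thesis by (simp add: tendsto_cong)
qed

text \<open>For fixed \<theta> with sin \<theta> \<noteq> 0, the inner integral is O(1/p), hence o(p^(-\<nu>)) for \<nu> < 1.\<close>
lemma inner_eps_weighted_tendsto_zero:
  assumes nu: "\<nu> < 1" and s: "sin \<theta> \<noteq> 0"
  shows "((\<lambda>p. p powr \<nu> * inner_eps p \<theta>) \<longlongrightarrow> 0) at_top"
proof (rule tendsto_sandwich[OF _ _ tendsto_const powr_over_linear_tendsto_zero[OF nu]])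
  show "(sin \<theta>)\<^sup>2 / 2 > 0" using s by simp
  show "\<forall>\<^sub>F p in at_top. 0 \<le> p powr \<nu> * inner_eps p \<theta>" by (simp add: inner_eps_nonneg)
  show "\<forall>\<^sub>F p in at_top. p powr \<nu> * inner_eps p \<theta> \<le> p powr \<nu> * ((p - 2) * ((sin \<theta>)\<^sup>2 / 2)) powr (-1)"
    using eventually_gt_at_top[of 2]
  proof eventually_elim
    case (elim p)
    have "inner_eps p \<theta> \<le> ((p - 2) * ((sin \<theta>)\<^sup>2 / 2)) powr (-1)"
      using elim s by (intro inner_eps_bound) auto
    thus ?case by (intro mult_left_mono) auto
  qed
qed

text \<open>For p \<ge> 3 the factor p^\<nu> is absorbed by (p - 2)^(-\<nu>) at the price of
  the weight sin^(-2\<nu>) and the constant (2p/(p-2))^\<nu> \<le> 6.\<close>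
lemma weight_exchange:
  fixes p S \<nu> :: real
  assumes p: "p \<ge> 3" and S: "S > 0" and nu: "0 \<le> \<nu>" "\<nu> \<le> 1"
  shows "p powr \<nu> * ((p - 2) * (S\<^sup>2 / 2)) powr (-\<nu>) * S ^ N \<le> 6 * S powr (real N - 2 * \<nu>)"
proof -
  have split: "((p - 2) * (S\<^sup>2 / 2)) powr (-\<nu>) = ((p - 2) / 2) powr (-\<nu>) * S powr (-2 * \<nu>)"
  proof -
    have base: "(p - 2) * (S\<^sup>2 / 2) = ((p - 2) / 2) * S powr 2" using S by (simp add: powr_realpow)
    have "((p - 2) * (S\<^sup>2 / 2)) powr (-\<nu>) = ((p - 2) / 2) powr (-\<nu>) * (S powr 2) powr (-\<nu>)"
      unfolding base by (rule powr_mult)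
    thus ?thesis by (simp add: powr_powr)
  qed
  have const: "p powr \<nu> * ((p - 2) / 2) powr (-\<nu>) = (2 * p / (p - 2)) powr \<nu>"
    using p by (simp add: powr_minus powr_divide divide_simps powr_mult)
  have weight: "S powr (-2 * \<nu>) * S ^ N = S powr (real N - 2 * \<nu>)"
    using S by (simp add: powr_realpow[of S N, symmetric] powr_add[symmetric])
  have eq: "p powr \<nu> * ((p - 2) * (S\<^sup>2 / 2)) powr (-\<nu>) * S ^ N
      = (2 * p / (p - 2)) powr \<nu> * S powr (real N - 2 * \<nu>)"
    unfolding split const[symmetric] weight[symmetric] by (simp only: mult.assoc)
  have "(2 * p / (p - 2)) powr \<nu> \<le> (2 * p / (p - 2)) powr 1"
    using p nu by (intro powr_mono) (auto simp: field_simps)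
  also have "\<dots> \<le> 6" using p by (simp add: field_simps)
  finally show ?thesis unfolding eq by (intro mult_right_mono) auto
qed

text \<open>The integrable majorant for dominated convergence (bound with \<mu> = \<nu>).\<close>
lemma inner_eps_weighted_dominated:
  assumes p: "p \<ge> 3" and s: "sin \<theta> > 0" and nu: "0 \<le> \<nu>" "\<nu> \<le> 1"
  shows "p powr \<nu> * inner_eps p \<theta> * sin \<theta> ^ N \<le> 6 * sin \<theta> powr (real N - 2 * \<nu>)"
proof -
  have "p powr \<nu> * inner_eps p \<theta> * sin \<theta> ^ N
      \<le> p powr \<nu> * ((p - 2) * ((sin \<theta>)\<^sup>2 / 2)) powr (-\<nu>) * sin \<theta> ^ N"
    using p s nu by (intro mult_right_mono mult_left_mono inner_eps_bound) auto
  also have "\<dots> \<le> 6 * sin \<theta> powr (real N - 2 * \<nu>)"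
    using p s nu by (rule weight_exchange)
  finally show ?thesis .
qed

text \<open>Almost every \<theta> lies either in the open interval (0,pi), where sin \<theta> > 0, or
  outside [0,pi]: the endpoints, where the sine vanishes, form a null set.\<close>
lemma AE_interior_or_outside:
  "AE \<theta> in lborel. \<theta> \<in> {0<..<pi} \<or> \<theta> \<notin> {0..pi::real}"
  using AE_lborel_singleton[of 0] AE_lborel_singleton[of pi] by eventually_elim auto

lemma weighted_integrand_AE_tendsto_zero:
  assumes nu: "\<nu> < 1"
  shows "AE \<theta> in lborel. ((\<lambda>p. p powr \<nu> * inner_eps p \<theta> *
           (indicator {0..pi} \<theta> *\<^sub>R (b (cos \<theta>) * sin \<theta> ^ N))) \<longlongrightarrow> 0) at_top"
  using AE_interior_or_outside
proof eventually_elim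
  case (elim \<theta>)
  show ?case
  proof (cases "\<theta> \<in> {0<..<pi}")
    case True
    hence "sin \<theta> \<noteq> 0" using sin_gt_zero[of \<theta>] by auto
    from tendsto_mult_left_zero[OF inner_eps_weighted_tendsto_zero[OF nu this]]
    show ?thesis .
  next
    case False
    with elim have "\<theta> \<notin> {0..pi}" by blast
    thus ?thesis by simp
  qed
qed

lemma weighted_integrand_AE_dominated:
  assumes p: "p \<ge> 3" and nu: "0 \<le> \<nu>" "\<nu> \<le> 1" and b_nonneg: "\<forall>x\<in>{-1..1}. b x \<ge> 0"
  shows "AE \<theta> in lborel. norm (p powr \<nu> * inner_eps p \<theta> *
           (indicator {0..pi} \<theta> *\<^sub>R (b (cos \<theta>) * sin \<theta> ^ N)))
         \<le> 6 * (indicator {0..pi} \<theta> *\<^sub>R (b (cos \<theta>) * sin \<theta> powr (real N - 2 * \<nu>)))"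
  using AE_interior_or_outside
proof eventually_elim
  case (elim \<theta>)
  show ?case
  proof (cases "\<theta> \<in> {0<..<pi}")
    case True
    hence sin_pos: "sin \<theta> > 0" using sin_gt_zero[of \<theta>] by auto
    have b_cos: "b (cos \<theta>) \<ge> 0" using b_nonneg by auto
    have "norm (p powr \<nu> * inner_eps p \<theta> * (indicator {0..pi} \<theta> *\<^sub>R (b (cos \<theta>) * sin \<theta> ^ N)))
        = p powr \<nu> * inner_eps p \<theta> * sin \<theta> ^ N * b (cos \<theta>)"
      using True sin_pos b_cos inner_eps_nonneg[of p \<theta>] by simp
    also have "\<dots> \<le> 6 * sin \<theta> powr (real N - 2 * \<nu>) * b (cos \<theta>)"
      using p sin_pos nu b_cos by (intro mult_right_mono inner_eps_weighted_dominated) auto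
    finally show ?thesis using True by (simp add: mult_ac)
  next
    case False
    with elim have "\<theta> \<notin> {0..pi}" by blast
    thus ?thesis by simp
  qed
qed

lemma weighted_outer_integral_tendsto_zero:
  fixes b :: "real \<Rightarrow> real" and \<nu> :: real
  assumes nu: "0 \<le> \<nu>" "\<nu> < 1"
    and b_nonneg: "\<forall>x\<in>{-1..1}. b x \<ge> 0"
    and F_int: "set_integrable lborel {0..pi} (\<lambda>\<theta>. b (cos \<theta>) * sin \<theta> ^ N)"
    and G_int: "set_integrable lborel {0..pi} (\<lambda>\<theta>. b (cos \<theta>) * sin \<theta> powr (real N - 2 * \<nu>))"
  shows "((\<lambda>p. p powr \<nu> * (LINT \<theta>:{0..pi}|lborel. inner_eps p \<theta> * b (cos \<theta>) * sin \<theta> ^ N))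
           \<longlongrightarrow> 0) at_top"
proof -
  define F where "F = (\<lambda>\<theta>. indicator {0..pi} \<theta> *\<^sub>R (b (cos \<theta>) * sin \<theta> ^ N))"
  define G where "G = (\<lambda>\<theta>. indicator {0..pi} \<theta> *\<^sub>R (b (cos \<theta>) * sin \<theta> powr (real N - 2 * \<nu>)))"
  define s where "s = (\<lambda>p \<theta>. p powr \<nu> * inner_eps p \<theta> * F \<theta>)"
  have outer_eq: "p powr \<nu> * (LINT \<theta>:{0..pi}|lborel. inner_eps p \<theta> * b (cos \<theta>) * sin \<theta> ^ N)
      = integral\<^sup>L lborel (s p)" for p
    unfolding set_lebesgue_integral_def s_def F_def
    by (subst integral_mult_right_zero[symmetric], rule Bochner_Integration.integral_cong)
       (auto simp: indicator_def)
  have "((\<lambda>p. integral\<^sup>L lborel (s p)) \<longlongrightarrow> integral\<^sup>L lborel (\<lambda>_::real. 0::real)) at_top"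
  proof (rule integral_dominated_convergence_at_top[where w="\<lambda>\<theta>. 6 * G \<theta>"])
    show "s p \<in> borel_measurable lborel" for p
      using F_int inner_eps_measurable[of p] unfolding s_def F_def set_integrable_def by measurable
    show "integrable lborel (\<lambda>\<theta>. 6 * G \<theta>)" using G_int unfolding G_def set_integrable_def by simp
    show "AE \<theta> in lborel. ((\<lambda>p. s p \<theta>) \<longlongrightarrow> 0) at_top"
      unfolding s_def F_def using nu by (intro weighted_integrand_AE_tendsto_zero) auto
    show "\<forall>\<^sub>F p in at_top. AE \<theta> in lborel. norm (s p \<theta>) \<le> 6 * G \<theta>"
      using eventually_ge_at_top[of 3] unfolding s_def F_def G_def
    proof eventually_elim
      case (elim p)
      show ?case using weighted_integrand_AE_dominated[OF elim nu(1) _ b_nonneg] nu(2) by simp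
    qed
  qed simp
  thus ?thesis unfolding outer_eq by simp
qed

lemma eps_eq_outer_integral:
  "eps N b p = 2 / A2 N b * sphere_meas N *
     (LINT \<theta>:{0..pi}|lborel. inner_eps p \<theta> * b (cos \<theta>) * sin \<theta> ^ N)"
  unfolding eps_def inner_eps_def by simp

lemma eps_weighted_tendsto_zero:
  assumes "0 \<le> \<nu>" "\<nu> < 1" "\<forall>x\<in>{-1..1}. b x \<ge> 0"
    and "set_integrable lborel {0..pi} (\<lambda>\<theta>. b (cos \<theta>) * sin \<theta> ^ N)"
    and "set_integrable lborel {0..pi} (\<lambda>\<theta>. b (cos \<theta>) * sin \<theta> powr (real N - 2 * \<nu>))"
  shows "((\<lambda>p. p powr \<nu> * eps N b p) \<longlongrightarrow> 0) at_top"
  using tendsto_mult_right_zero[OF weighted_outer_integral_tendsto_zero[OF assms],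
      of "2 / A2 N b * sphere_meas N"]
  by (simp add: eps_eq_outer_integral mult_ac)

text \<open>On [0,pi] the sine is nonnegative, so for N \<ge> 1 the power sin^N agrees with
  sin powr N; hence (H0) is the case \<nu> = 0 of the weighted hypothesis.\<close>
lemma integrable_sin_powr_of_power:
  assumes "N \<ge> 1" and "set_integrable lborel {0..pi} (\<lambda>\<theta>. b (cos \<theta>) * sin \<theta> ^ N)"
  shows "set_integrable lborel {0..pi} (\<lambda>\<theta>. b (cos \<theta>) * sin \<theta> powr real N)"
proof -
  have "b (cos \<theta>) * sin \<theta> powr real N = b (cos \<theta>) * sin \<theta> ^ N" if "\<theta> \<in> {0..pi}" for \<theta>
    using that assms(1) sin_ge_zero[of \<theta>] by (simp add: powr_realpow')
  thus ?thesis using assms(2) by (subst set_integrable_cong) auto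
qed

lemma tendsto_zero_mult_powr_nonpos:
  fixes f :: "real \<Rightarrow> real"
  assumes "\<nu> \<le> 0" and "(f \<longlongrightarrow> 0) at_top"
  shows "((\<lambda>p. p powr \<nu> * f p) \<longlongrightarrow> 0) at_top"
proof (rule Lim_null_comparison[OF _ tendsto_norm_zero[OF assms(2)]])
  show "\<forall>\<^sub>F p in at_top. norm (p powr \<nu> * f p) \<le> norm (f p)"
    using eventually_ge_at_top[of 1]
  proof eventually_elim
    case (elim p)
    have "p powr \<nu> \<le> p powr 0" using elim assms(1) by (intro powr_mono) auto
    thus ?case using elim by (auto simp: abs_mult intro!: mult_left_le_one_le)
  qed
qed

theorem lemma3p4:
  fixes N :: nat and b :: "real \<Rightarrow> real" and \<gamma> :: real
  assumes N: "N \<ge> 2"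
    and b_meas: "set_borel_measurable borel {-1..1} b"
    and b_nonneg: "\<forall>x\<in>{-1..1}. b x \<ge> 0"
    and gamma: "0 < \<gamma>" "\<gamma> \<le> 2"
    and H0: "set_integrable lborel {0..pi} (\<lambda>\<theta>. b (cos \<theta>) * sin \<theta> ^ N)"
    and A2_pos: "A2 N b > 0"
  shows "((\<lambda>p. eps N b p) \<longlongrightarrow> 0) at_top \<and>
         ((0 < \<gamma> \<and> \<gamma> \<le> 1) \<or>
         (1 < \<gamma> \<and> \<gamma> < 2 \<and>
          set_integrable lborel {0..pi}
            (\<lambda>\<theta>. b (cos \<theta>) * sin \<theta> powr (real N - 2 * (2 - 2 / \<gamma>))))
         \<longrightarrow> ((\<lambda>p. p powr (2 - 2 / \<gamma>) * eps N b p) \<longlongrightarrow> 0) at_top)"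
proof -
  have "set_integrable lborel {0..pi} (\<lambda>\<theta>. b (cos \<theta>) * sin \<theta> powr (real N - 2 * 0))"
    using integrable_sin_powr_of_power[OF _ H0] N by simp
  from eps_weighted_tendsto_zero[OF _ _ b_nonneg H0 this]
  have "((\<lambda>p. p powr 0 * eps N b p) \<longlongrightarrow> 0) at_top" by simp
  moreover have "\<forall>\<^sub>F p in at_top. p powr 0 * eps N b p = eps N b p"
    using eventually_gt_at_top[of 0] by eventually_elim simp
  ultimately have eps_lim: "((\<lambda>p. eps N b p) \<longlongrightarrow> 0) at_top"
    by (rule Lim_transform_eventually)
  show ?thesis
  proof (intro conjI impI eps_lim)
    assume "(0 < \<gamma> \<and> \<gamma> \<le> 1) \<or> (1 < \<gamma> \<and> \<gamma> < 2 \<and> set_integrable lborel {0..pi}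
              (\<lambda>\<theta>. b (cos \<theta>) * sin \<theta> powr (real N - 2 * (2 - 2 / \<gamma>))))"
    thus "((\<lambda>p. p powr (2 - 2 / \<gamma>) * eps N b p) \<longlongrightarrow> 0) at_top"
    proof (elim disjE conjE)
      assume "0 < \<gamma>" "\<gamma> \<le> 1"
      hence "2 - 2 / \<gamma> \<le> 0" by (simp add: field_simps)
      thus ?thesis using tendsto_zero_mult_powr_nonpos[OF _ eps_lim] by blast
    next
      assume "1 < \<gamma>" "\<gamma> < 2" and H2: "set_integrable lborel {0..pi}
        (\<lambda>\<theta>. b (cos \<theta>) * sin \<theta> powr (real N - 2 * (2 - 2 / \<gamma>)))"
      hence "0 \<le> 2 - 2 / \<gamma>" "2 - 2 / \<gamma> < 1" by (simp_all add: field_simps)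
      thus ?thesis using eps_weighted_tendsto_zero[OF _ _ b_nonneg H0 H2] by blast
    qed
  qed
qed

end
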